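(* If the streaming algorithm $\mathcal A$ uses space at most $w$ bits, then for every fixing of all the strings $\Gamma$ sampled during the execution, all keys $(k_p)_{p\in\{0,1\}^d}$, and the random strings $r_1,r_2$, the resulting (deterministic) mechanism $\texttt{AnswerQueries}_{\vec\Gamma,\vec k,r_1,r_2}$ is transcript compressible to $w$ bits.
   Context: A statistical query is $q:\{0,1\}^d\to\{0,1\}$. In the accuracy game between a mechanism $\mathcal M$ holding a database $S\in(\{0,1\}^d)^n$ and an adversary $\mathbb A$: for $i=1,\dots,\ell$, $\mathbb A$ chooses $q_i$ (depending on previous answers), $\mathcal M$ answers $z_i$, $\mathbb A$ receives $z_i$; the output is the transcript $(q_1,z_1,\dots,q_\ell,z_\ell)$. $\mathcal M$ is transcript compressible to $b'$ bits if for every deterministic adversary $\mathbb A$ there is a set $H_{\mathbb A}$ of transcripts with $|H_{\mathbb A}|\le 2^{b'}$ such that for every database $S\in(\{0,1\}^d)^n$ the transcript lies in $H_{\mathbb A}$ with probability $1$. $\texttt{AnswerQueries}$ (built from a streaming algorithm $\mathcal A$ over the domain $\{0,1\}^d\times\{0,1\}^b$ and a function $\mathrm{PRG}:\{0,1\}^a\times\{0,1\}^b\to\{0,1\}$) on input $P=(p_1,\dots,p_n)$: (1) sample independent uniform keys $k_p\in\{0,1\}^b$ for all $p\in\{0,1\}^d$; (2) run $\mathcal A$ with random string $r_1$ and feed it $(p_1,k_{p_1}),\dots,(p_n,k_{p_n})$; (3) switch $\mathcal A$'s source of coins to random string $r_2$; (4) repeat $\ell=\frac{m-n}{(a+1)2^d}$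 times: receive a query $q$; for each $p\in\{0,1\}^d$ in lexicographic order, sample $\Gamma\in\{0,1\}^a$ uniformly, feed $\mathcal A$ $a$ updates whose first bits form $\Gamma$, then an update whose first bit is $\mathrm{PRG}(\Gamma,k_p)\oplus q(p)$; output $\mathcal A$'s output after this last update. The space of $\mathcal A$ is the number of bits of memory it retains between updates. *)

theory Defs
  imports Main
begin

text \<open>A streaming algorithm over update domain 'u, with coin source 'r, memory
  states 's and outputs 'z. The transition may depend on the coin string and on
  the (global) index of the update in the stream; the output after an update
  is a function of the coins and the retained memory.\<close>
record ('r, 's, 'u, 'z) stream_alg =
  s_init :: "'r \<Rightarrow> 's"
  s_step :: "'r \<Rightarrow> nat \<Rightarrow> 's \<Rightarrow> 'u \<Rightarrow> 's"
  s_out  :: "'r \<Rightarrow> 's \<Rightarrow> 'z"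

text \<open>Space at most w bits: all memory states ever retained lie in a set of at
  most 2^w states (i.e. can be encoded by w bits), for every coin string.\<close>
definition uses_space :: "('r, 's, 'u, 'z) stream_alg \<Rightarrow> nat \<Rightarrow> bool" where
  "uses_space A w \<longleftrightarrow> (\<exists>Q. finite Q \<and> card Q \<le> 2 ^ w \<and>
      (\<forall>r. s_init A r \<in> Q) \<and> (\<forall>r t q u. q \<in> Q \<longrightarrow> s_step A r t q u \<in> Q))"

fun run_upds :: "('r, 's, 'u, 'z) stream_alg \<Rightarrow> 'r \<Rightarrow> nat \<Rightarrow> 's \<Rightarrow> 'u list \<Rightarrow> 's" where
  "run_upds A r t s [] = s"
| "run_upds A r t s (u # us) = run_upds A r (Suc t) (s_step A r t s u) us"

fun all_pts :: "nat \<Rightarrow> bool list list" where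
  "all_pts 0 = [[]]"
| "all_pts (Suc d) = map (Cons False) (all_pts d) @ map (Cons True) (all_pts d)"

type_synonym query = "bool list \<Rightarrow> bool"
type_synonym 'z transcript = "(query \<times> 'z) list"
type_synonym 'z adversary = "'z transcript \<Rightarrow> query"

text \<open>An update of {0,1}^d x {0,1}^b whose first bit is c (remaining bits 0).\<close>
definition bit_upd :: "nat \<Rightarrow> nat \<Rightarrow> bool \<Rightarrow> bool list \<times> bool list" where
  "bit_upd d b c = (let bs = c # replicate (d + b - 1) False in (take d bs, drop d bs))"

definition round_upds :: "nat \<Rightarrow> nat \<Rightarrow> (bool list \<Rightarrow> bool list \<Rightarrow> bool)
    \<Rightarrow> (nat \<Rightarrow> bool list \<Rightarrow> bool list) \<Rightarrow> (bool list \<Rightarrow> bool list) \<Rightarrow> nat \<Rightarrow> query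
    \<Rightarrow> (bool list \<times> bool list) list" where
  "round_upds d b PRG Gam ks i q = concat (map (\<lambda>p.
      map (bit_upd d b) (Gam i p) @ [bit_upd d b (PRG (Gam i p) (ks p) \<noteq> q p)]) (all_pts d))"

text \<open>Query phase: round i, k rounds remaining, state s, global time t, history h.\<close>
fun play :: "('r, 's, bool list \<times> bool list, 'z) stream_alg \<Rightarrow> nat \<Rightarrow> nat
    \<Rightarrow> (bool list \<Rightarrow> bool list \<Rightarrow> bool) \<Rightarrow> (nat \<Rightarrow> bool list \<Rightarrow> bool list)
    \<Rightarrow> (bool list \<Rightarrow> bool list) \<Rightarrow> 'r \<Rightarrow> 'z adversary
    \<Rightarrow> nat \<Rightarrow> nat \<Rightarrow> 's \<Rightarrow> nat \<Rightarrow> 'z transcript \<Rightarrow> 'z transcript" where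
  "play A d b PRG Gam ks r2 adv i 0 s t h = h"
| "play A d b PRG Gam ks r2 adv i (Suc k) s t h =
    (let q = adv h; us = round_upds d b PRG Gam ks i q;
         s' = run_upds A r2 t s us; z = s_out A r2 s'
     in play A d b PRG Gam ks r2 adv (Suc i) k s' (t + length us) (h @ [(q, z)]))"

definition answer_queries :: "('r, 's, bool list \<times> bool list, 'z) stream_alg \<Rightarrow> nat \<Rightarrow> nat
    \<Rightarrow> nat \<Rightarrow> (bool list \<Rightarrow> bool list \<Rightarrow> bool) \<Rightarrow> (nat \<Rightarrow> bool list \<Rightarrow> bool list)
    \<Rightarrow> (bool list \<Rightarrow> bool list) \<Rightarrow> 'r \<Rightarrow> 'r
    \<Rightarrow> bool list list \<Rightarrow> 'z adversary \<Rightarrow> 'z transcript" where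
  "answer_queries A d b ell PRG Gam ks r1 r2 S adv =
    (let s1 = run_upds A r1 0 (s_init A r1) (map (\<lambda>p. (p, ks p)) S)
     in play A d b PRG Gam ks r2 adv 0 ell s1 (length S) [])"

definition transcript_compressible ::
    "('db \<Rightarrow> 'adv \<Rightarrow> 't) \<Rightarrow> 'db set \<Rightarrow> nat \<Rightarrow> bool" where
  "transcript_compressible M DB b' \<longleftrightarrow>
     (\<forall>adv. \<exists>H. finite H \<and> card H \<le> 2 ^ b' \<and> (\<forall>S \<in> DB. M S adv \<in> H))"

definition databases :: "nat \<Rightarrow> nat \<Rightarrow> bool list list set" where
  "databases d n = {S. length S = n \<and> (\<forall>p \<in> set S. length p = d)}"

end

theory Submission
  imports Defs
begin

text \<open>After the database has been streamed in, the whole query phase is a deterministic function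
  of the adversary and of the retained memory state alone: the strings, keys and coins are fixed,
  and the global time is the database size n.  Hence the transcripts against a fixed adversary
  are indexed by at most 2^w memory states.\<close>

lemma run_upds_closed:
  assumes step_closed: "\<And>r t q u. q \<in> Q \<Longrightarrow> s_step A r t q u \<in> Q"
    and "s \<in> Q"
  shows "run_upds A r t s us \<in> Q"
  using \<open>s \<in> Q\<close> by (induction us arbitrary: t s) (simp_all add: step_closed)

lemma uses_space_run_upds_from_init:
  assumes "uses_space A w"
  obtains Q where "finite Q" "card Q \<le> 2 ^ w"
    and "\<And>r t us. run_upds A r t (s_init A r) us \<in> Q"
  using assms run_upds_closed unfolding uses_space_def by metis

lemma transcript_compressible_if_factors_through:
  assumes "finite Q" "card Q \<le> 2 ^ b'"
    and factors: "\<And>adv. \<exists>f. \<forall>S \<in> DB. M S adv \<in> f ` Q"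
  shows "transcript_compressible M DB b'"
  unfolding transcript_compressible_def
proof
  fix adv
  obtain f where "\<forall>S \<in> DB. M S adv \<in> f ` Q"
    using factors by blast
  moreover have "card (f ` Q) \<le> 2 ^ b'"
    using \<open>card Q \<le> 2 ^ b'\<close> card_image_le[OF \<open>finite Q\<close>] le_trans by blast
  ultimately show "\<exists>H. finite H \<and> card H \<le> 2 ^ b' \<and> (\<forall>S \<in> DB. M S adv \<in> H)"
    using \<open>finite Q\<close> by blast
qed

lemma answer_queries_eq_play:
  assumes "length S = n"
  shows "answer_queries A d b ell PRG Gam ks r1 r2 S adv
    = play A d b PRG Gam ks r2 adv 0 ell
        (run_upds A r1 0 (s_init A r1) (map (\<lambda>p. (p, ks p)) S)) n []"
  using assms by (simp add: answer_queries_def)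

theorem claim5p2:
  fixes A :: "('r, 's, bool list \<times> bool list, 'z) stream_alg"
    and d a b n m w :: nat
    and PRG :: "bool list \<Rightarrow> bool list \<Rightarrow> bool"
    and Gam :: "nat \<Rightarrow> bool list \<Rightarrow> bool list"
    and ks :: "bool list \<Rightarrow> bool list"
    and r1 r2 :: 'r
  assumes "uses_space A w"
    and "\<forall>i p. length (Gam i p) = a"
    and "\<forall>p. length (ks p) = b"
  shows "transcript_compressible
           (\<lambda>S adv. answer_queries A d b ((m - n) div ((a + 1) * 2 ^ d)) PRG Gam ks r1 r2 S adv)
           (databases d n) w"
proof -
  let ?ell = "(m - n) div ((a + 1) * 2 ^ d)"
  obtain Q where "finite Q" "card Q \<le> 2 ^ w"
    and reachable: "\<And>r t us. run_upds A r t (s_init A r) us \<in> Q"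
    using uses_space_run_upds_from_init[OF \<open>uses_space A w\<close>] by blast
  show ?thesis
  proof (rule transcript_compressible_if_factors_through[OF \<open>finite Q\<close> \<open>card Q \<le> 2 ^ w\<close>])
    fix adv
    show "\<exists>f. \<forall>S \<in> databases d n.
      answer_queries A d b ?ell PRG Gam ks r1 r2 S adv \<in> f ` Q"
      by (rule exI[of _ "\<lambda>s. play A d b PRG Gam ks r2 adv 0 ?ell s n []"])
        (auto simp: databases_def answer_queries_eq_play reachable)
  qed
qed

end
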